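(* Let $r(x)$ be a meromorphic function on $\mathbb C$, not identically zero, all of whose zeros $x_k$ and all of whose poles $y_\ell$ are simple, and let $q(x)=1/r(x)$. Consider the system $$\frac{dW(x,\rho)}{dx}=\rho\begin{pmatrix}0& r(x)^{-2}\\ r(x)^2&0\end{pmatrix}W(x,\rho).$$ Then for every $\rho\in\mathbb C$ every zero and every pole of $r$ is a strong regular point of this system (i.e. the fundamental solution is global strong regular, hence meromorphic in $x$ on $\mathbb C$) if and only if $$r''(x_k)=0\ \text{for every zero } x_k \text{ of } r,\qquad q''(y_\ell)=0\ \text{for every zero } y_\ell \text{ of } q.$$
   Context: For a system $\frac{dW}{dx}=A(x)W$ with $A$ holomorphic and single-valued in a punctured disc around $x_0$, every fundamental (invertible matrix) solution has the form $W(x)=S(x)(x-x_0)^{\Phi}$ with $S$ holomorphic and single-valued in the punctured disc and $\Phi$ a constant matrix. The point $x_0$ is called strong regular for the system if a fundamental solution $W$ is single-valued in the punctured disc and has at most a pole at $x_0$, i.e. $W(x)=\sum_{k\ge m}b_k(x-x_0)^k$ for some $m\in\mathbb Z$. A fundamental solution is called global strong regular if it is strong regular at every singular point of $A$. *)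

theory Defs
  imports "HOL-Analysis.Analysis" "HOL-Complex_Analysis.Complex_Analysis"
begin

definition strong_regular_point :: "(complex \<Rightarrow> complex^2^2) \<Rightarrow> complex \<Rightarrow> bool" where
  "strong_regular_point A x0 \<longleftrightarrow>
     (\<exists>\<epsilon>>0. \<exists>W :: complex \<Rightarrow> complex^2^2.
        (\<forall>i j. (\<lambda>x. A x $ i $ j) holomorphic_on (ball x0 \<epsilon> - {x0})) \<and>
        (\<forall>x\<in>ball x0 \<epsilon> - {x0}. det (W x) \<noteq> 0 \<and>
            (\<forall>i j. ((\<lambda>y. W y $ i $ j) has_field_derivative ((A x ** W x) $ i $ j)) (at x))) \<and>
        (\<forall>i j. not_essential (\<lambda>x. W x $ i $ j) x0))"

definition sysA :: "(complex \<Rightarrow> complex) \<Rightarrow> complex \<Rightarrow> complex \<Rightarrow> complex^2^2" where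
  "sysA r \<rho> x = vector [vector [0, \<rho> * inverse ((r x)^2)], vector [\<rho> * (r x)^2, 0]]"

end

theory Submission
  imports Defs
begin

(* Near a simple zero x0 of s (s = r at a zero of r, s = 1/r at a pole; for 1/r the system is
   the one for r with the two components exchanged) the substitution y = s u, z = s' u + \<rho> v / s
   turns u' = \<rho> s^-2 v, v' = \<rho> s^2 u into y'' = (\<rho>^2 + s''/s) y, and the two Wronskians
   differ by the factor \<rho>.
   If s''(x0) = 0, the coefficient \<rho>^2 + s''/s is holomorphic at x0; Picard iteration gives a
   holomorphic fundamental system of y'' = p y, and transforming back gives a fundamental matrix
   with at most a pole at x0.
   If s''(x0) \<noteq> 0, then x0 is a regular singular point of (x - x0) y'' = q y with q(x0) \<noteq> 0: the
   indicial equation is n (n - 1) = 0 and the exponent 0 is obstructed, so every solution without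
   essential singularity vanishes at x0 and has bounded derivative. The Wronskian of two such
   solutions then tends to 0, whereas it is a nonzero constant. *)

section \<open>Primitives along segments in a disc\<close>

lemma closed_segment_subset_cball:
  fixes a :: "'a::real_normed_vector"
  assumes "x \<in> cball a e"
  shows "closed_segment a x \<subseteq> cball a e"
  using assms convex_cball[of a e] by (intro closed_segment_subset) (auto intro: order_trans[OF zero_le_dist])

lemma has_field_derivative_contour_integral_linepath:
  fixes f :: "complex \<Rightarrow> complex"
  assumes holf: "f holomorphic_on ball a R" and x: "x \<in> ball a R"
  shows "((\<lambda>x. contour_integral (linepath a x) f) has_field_derivative f x) (at x)"
proof (rule triangle_contour_integrals_starlike_primitive[where S = "ball a R"])
  have a: "a \<in> ball a R"
    using x by (metis centre_in_ball empty_iff ball_eq_empty not_le)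
  then show "a \<in> ball a R" .
  show "continuous_on (ball a R) f"
    using holf holomorphic_on_imp_continuous_on by blast
  show "closed_segment a y \<subseteq> ball a R" if "y \<in> ball a R" for y
    using a that convex_ball convex_contains_segment by blast
  fix b c assume "closed_segment b c \<subseteq> ball a R"
  then have "convex hull {a, b, c} \<subseteq> ball a R"
    using a by (intro hull_minimal) (auto simp: convex_ball)
  then have "(f has_contour_integral 0) (linepath a b +++ linepath b c +++ linepath c a)"
    by (intro Cauchy_theorem_triangle holomorphic_on_subset[OF holf])
  then show "contour_integral (linepath a b) f + contour_integral (linepath b c) f +
      contour_integral (linepath c a) f = 0"
    by (rule has_chain_integral_chain_integral3)
qed (use x in auto)

lemma holomorphic_on_contour_integral_linepath:
  fixes f :: "complex \<Rightarrow> complex"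
  assumes "f holomorphic_on ball a R"
  shows "(\<lambda>x. contour_integral (linepath a x) f) holomorphic_on ball a R"
  unfolding holomorphic_on_open[OF open_ball]
  using has_field_derivative_contour_integral_linepath[OF assms] by blast

lemma contour_integrable_linepath_cball:
  fixes f :: "complex \<Rightarrow> complex"
  assumes "f holomorphic_on ball a R" "e < R" "x \<in> cball a e"
  shows "f contour_integrable_on linepath a x"
proof (rule contour_integrable_holomorphic_simple[OF assms(1)])
  show "path_image (linepath a x) \<subseteq> ball a R"
    using closed_segment_subset_cball[OF assms(3)] assms(2) by auto
qed auto

lemma norm_contour_integral_linepath_le:
  fixes f :: "complex \<Rightarrow> complex"
  assumes holf: "f holomorphic_on ball a R" and e: "e < R" and x: "x \<in> cball a e"
    and B: "\<And>w. w \<in> cball a e \<Longrightarrow> norm (f w) \<le> B"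
  shows "norm (contour_integral (linepath a x) f) \<le> B * e"
proof -
  have B0: "0 \<le> B"
    using B[of x] x norm_ge_zero order_trans by blast
  have "norm (contour_integral (linepath a x) f) \<le> B * norm (x - a)"
    using closed_segment_subset_cball[OF x] B
    by (intro has_contour_integral_bound_linepath[OF has_contour_integral_integral B0]
        contour_integrable_linepath_cball[OF holf e x]) auto
  also have "\<dots> \<le> B * e"
    using x B0 by (intro mult_left_mono) (auto simp: dist_norm norm_minus_commute)
  finally show ?thesis .
qed

lemma contour_integral_linepath_uniform_limit:
  fixes f :: "nat \<Rightarrow> complex \<Rightarrow> complex"
  assumes ul: "uniform_limit (cball a e) f l sequentially"
    and holf: "\<And>n. f n holomorphic_on ball a R" and e: "e < R" and x: "x \<in> cball a e"
  shows "(\<lambda>n. contour_integral (linepath a x) (f n)) \<longlonglongrightarrow> contour_integral (linepath a x) l"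
proof (rule contour_integral_uniform_limit(2)[where B = "norm (x - a)"])
  have "path_image (linepath a x) \<subseteq> cball a e"
    using closed_segment_subset_cball[OF x] by simp
  then show "uniform_limit (path_image (linepath a x)) f l sequentially"
    by (rule uniform_limit_on_subset[OF ul])
  show "\<forall>\<^sub>F n in sequentially. f n contour_integrable_on linepath a x"
    using contour_integrable_linepath_cball[OF holf e x] by simp
qed auto

lemma uniform_limit_mult_bounded:
  fixes f :: "nat \<Rightarrow> 'a \<Rightarrow> 'b::real_normed_algebra"
  assumes ul: "uniform_limit S f l F" and M: "\<And>x. x \<in> S \<Longrightarrow> norm (p x) \<le> M"
  shows "uniform_limit S (\<lambda>n x. p x * f n x) (\<lambda>x. p x * l x) F"
proof (rule uniform_limitI)
  fix e :: real assume "e > 0"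
  then have "e / (\<bar>M\<bar> + 1) > 0" by simp
  from uniform_limitD[OF ul this]
  show "\<forall>\<^sub>F n in F. \<forall>x\<in>S. dist (p x * f n x) (p x * l x) < e"
  proof eventually_elim
    case (elim n)
    show ?case
    proof
      fix x assume x: "x \<in> S"
      have "dist (p x * f n x) (p x * l x) \<le> norm (p x) * dist (f n x) (l x)"
        by (metis dist_norm norm_mult_ineq right_diff_distrib)
      also have "\<dots> \<le> (\<bar>M\<bar> + 1) * dist (f n x) (l x)"
        using M[OF x] by (intro mult_right_mono) auto
      also have "\<dots> < (\<bar>M\<bar> + 1) * (e / (\<bar>M\<bar> + 1))"
        using elim x by (intro mult_strict_left_mono) auto
      finally show "dist (p x * f n x) (p x * l x) < e" by simp
    qed
  qed
qed

lemma uniform_limit_summable_increments: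
  fixes f :: "nat \<Rightarrow> 'a \<Rightarrow> 'b::banach"
  assumes "\<And>n x. x \<in> S \<Longrightarrow> norm (f (Suc n) x - f n x) \<le> M n" and "summable M"
  shows "uniform_limit S f (\<lambda>x. f 0 x + (\<Sum>i. f (Suc i) x - f i x)) sequentially"
proof -
  have "uniform_limit S (\<lambda>n x. \<Sum>i<n. f (Suc i) x - f i x) (\<lambda>x. \<Sum>i. f (Suc i) x - f i x) sequentially"
    using assms by (intro Weierstrass_m_test) auto
  then have "uniform_limit S (\<lambda>n x. f 0 x + (\<Sum>i<n. f (Suc i) x - f i x))
      (\<lambda>x. f 0 x + (\<Sum>i. f (Suc i) x - f i x)) sequentially"
    by (intro uniform_limit_add uniform_limit_const)
  moreover have "f 0 x + (\<Sum>i<n. f (Suc i) x - f i x) = f n x" for n x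
    using sum_lessThan_telescope[of "\<lambda>i. f i x" n] by simp
  ultimately show ?thesis
    by simp
qed

section \<open>Antidiagonal linear systems\<close>

(* (u, v) is a column of a solution of W' = [[0, a], [b, 0]] W; for a = 1 it is a solution y = u
   of y'' = b y together with its derivative z = v. *)
definition antidiag_solution ::
    "(complex \<Rightarrow> complex) \<Rightarrow> (complex \<Rightarrow> complex) \<Rightarrow> complex set \<Rightarrow> (complex \<Rightarrow> complex) \<Rightarrow> (complex \<Rightarrow> complex) \<Rightarrow> bool"
  where "antidiag_solution a b S u v \<longleftrightarrow>
    (\<forall>x\<in>S. (u has_field_derivative a x * v x) (at x) \<and> (v has_field_derivative b x * u x) (at x))"

lemma antidiag_solution_holomorphic:
  assumes "antidiag_solution a b S u v" "open S"
  shows "u holomorphic_on S" "v holomorphic_on S"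
  using assms unfolding antidiag_solution_def holomorphic_on_open[OF assms(2)] by blast+

lemma antidiag_solution_subset:
  "antidiag_solution a b S u v \<Longrightarrow> T \<subseteq> S \<Longrightarrow> antidiag_solution a b T u v"
  unfolding antidiag_solution_def by blast

lemma antidiag_solution_transform:
  assumes "antidiag_solution a b S u v" "open S" "\<And>x. x \<in> S \<Longrightarrow> u' x = u x"
  shows "antidiag_solution a b S u' v"
  unfolding antidiag_solution_def
proof
  fix x assume x: "x \<in> S"
  then have "(u has_field_derivative a x * v x) (at x)" "(v has_field_derivative b x * u x) (at x)"
    using assms(1) by (auto simp: antidiag_solution_def)
  then show "(u' has_field_derivative a x * v x) (at x) \<and> (v has_field_derivative b x * u' x) (at x)"
    using assms(2,3) x by (auto intro: has_field_derivative_transform_within_open[where S = S])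
qed

lemma antidiag_solution_coeff_cong:
  "antidiag_solution a b S u v \<Longrightarrow> (\<And>x. x \<in> S \<Longrightarrow> b x = b' x) \<Longrightarrow> antidiag_solution a b' S u v"
  by (simp add: antidiag_solution_def)

lemma antidiag_wronskian_constant:
  assumes "antidiag_solution a b S u1 v1" "antidiag_solution a b S u2 v2" "open S" "connected S"
  obtains c where "\<And>x. x \<in> S \<Longrightarrow> u1 x * v2 x - u2 x * v1 x = c"
proof -
  have deriv0: "((\<lambda>x. u1 x * v2 x - u2 x * v1 x) has_field_derivative 0) (at x)" if "x \<in> S" for x
    using assms(1,2) that unfolding antidiag_solution_def
    by (auto intro!: derivative_eq_intros simp: algebra_simps)
  then have "continuous_on S (\<lambda>x. u1 x * v2 x - u2 x * v1 x)"
    by (meson DERIV_isCont continuous_at_imp_continuous_on)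
  then show ?thesis
    using DERIV_zero_connected_constant[OF assms(4,3) finite.emptyI] deriv0 that by blast
qed

section \<open>Holomorphic solutions of y'' = p y by Picard iteration\<close>

fun picard_y :: "(complex \<Rightarrow> complex) \<Rightarrow> complex \<Rightarrow> complex \<Rightarrow> complex \<Rightarrow> nat \<Rightarrow> complex \<Rightarrow> complex"
and picard_z :: "(complex \<Rightarrow> complex) \<Rightarrow> complex \<Rightarrow> complex \<Rightarrow> complex \<Rightarrow> nat \<Rightarrow> complex \<Rightarrow> complex"
where
  "picard_y p x0 a b 0 = (\<lambda>_. 0)"
| "picard_y p x0 a b (Suc n) = (\<lambda>x. a + contour_integral (linepath x0 x) (picard_z p x0 a b n))"
| "picard_z p x0 a b 0 = (\<lambda>_. 0)"
| "picard_z p x0 a b (Suc n) = (\<lambda>x. b + contour_integral (linepath x0 x) (\<lambda>w. p w * picard_y p x0 a b n w))"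

lemma picard_holomorphic:
  assumes "p holomorphic_on ball x0 R"
  shows "picard_y p x0 a b n holomorphic_on ball x0 R \<and> picard_z p x0 a b n holomorphic_on ball x0 R"
  by (induction n) (auto intro!: holomorphic_intros holomorphic_on_contour_integral_linepath assms)

lemma picard_step_bound:
  assumes holp: "p holomorphic_on ball x0 R" and eR: "e < R"
    and M: "M \<ge> 1" "e * M \<le> 1/2" and pM: "\<And>w. w \<in> cball x0 e \<Longrightarrow> norm (p w) \<le> M"
    and hol: "f holomorphic_on ball x0 R" "g holomorphic_on ball x0 R"
    and fg: "\<And>w. w \<in> cball x0 e \<Longrightarrow> norm (f w - g w) \<le> B" and x: "x \<in> cball x0 e"
  shows "norm (contour_integral (linepath x0 x) f - contour_integral (linepath x0 x) g) \<le> B / 2"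
    and "norm (contour_integral (linepath x0 x) (\<lambda>w. p w * f w) -
      contour_integral (linepath x0 x) (\<lambda>w. p w * g w)) \<le> B / 2"
proof -
  have B: "B \<ge> 0"
    using fg[OF x] norm_ge_zero order_trans by blast
  have half: "norm (contour_integral (linepath x0 x) h) \<le> B / 2"
    if "h holomorphic_on ball x0 R" "\<And>w. w \<in> cball x0 e \<Longrightarrow> norm (h w) \<le> M * B" for h
  proof -
    have "norm (contour_integral (linepath x0 x) h) \<le> M * B * e"
      by (rule norm_contour_integral_linepath_le[OF that(1) eR x that(2)])
    also have "\<dots> = B * (e * M)" by simp
    also have "\<dots> \<le> B * (1/2)" using M(2) B by (rule mult_left_mono)
    finally show ?thesis by simp
  qed
  have diff: "contour_integral (linepath x0 x) h1 - contour_integral (linepath x0 x) h2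
      = contour_integral (linepath x0 x) (\<lambda>w. h1 w - h2 w)"
    if "h1 holomorphic_on ball x0 R" "h2 holomorphic_on ball x0 R" for h1 h2
    using that eR x by (simp add: contour_integral_diff contour_integrable_linepath_cball)
  have "norm (f w - g w) \<le> M * B" if "w \<in> cball x0 e" for w
    using fg[OF that] mult_right_mono[OF M(1) B] by simp
  then show "norm (contour_integral (linepath x0 x) f - contour_integral (linepath x0 x) g) \<le> B / 2"
    unfolding diff[OF hol] using hol by (intro half holomorphic_intros)
  have "norm (p w * f w - p w * g w) \<le> M * B" if "w \<in> cball x0 e" for w
    using fg[OF that] pM[OF that] B M
    by (auto simp: right_diff_distrib[symmetric] norm_mult intro: mult_mono)
  then have "norm (contour_integral (linepath x0 x) (\<lambda>w. p w * f w - p w * g w)) \<le> B / 2"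
    using hol holp by (intro half holomorphic_intros)
  then show "norm (contour_integral (linepath x0 x) (\<lambda>w. p w * f w) -
      contour_integral (linepath x0 x) (\<lambda>w. p w * g w)) \<le> B / 2"
    by (subst diff) (auto intro!: holomorphic_intros hol holp)
qed

lemma picard_increment_bound:
  assumes holp: "p holomorphic_on ball x0 R" and eR: "e < R"
    and M: "M \<ge> 1" "e * M \<le> 1/2" and pM: "\<And>w. w \<in> cball x0 e \<Longrightarrow> norm (p w) \<le> M"
  shows "\<forall>x\<in>cball x0 e.
      norm (picard_y p x0 a b (Suc n) x - picard_y p x0 a b n x) \<le> (norm a + norm b) * (1/2)^n \<and>
      norm (picard_z p x0 a b (Suc n) x - picard_z p x0 a b n x) \<le> (norm a + norm b) * (1/2)^n"
proof (induction n)
  case 0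
  show ?case
    by simp
next
  case (Suc n)
  have hol: "picard_y p x0 a b k holomorphic_on ball x0 R" "picard_z p x0 a b k holomorphic_on ball x0 R" for k
    using picard_holomorphic[OF holp] by auto
  show ?case
  proof
    fix x assume x: "x \<in> cball x0 e"
    have IH: "norm (picard_z p x0 a b (Suc n) w - picard_z p x0 a b n w) \<le> (norm a + norm b) * (1/2)^n"
      "norm (picard_y p x0 a b (Suc n) w - picard_y p x0 a b n w) \<le> (norm a + norm b) * (1/2)^n"
      if "w \<in> cball x0 e" for w
      using Suc that by blast+
    show "norm (picard_y p x0 a b (Suc (Suc n)) x - picard_y p x0 a b (Suc n) x) \<le> (norm a + norm b) * (1/2)^Suc n \<and>
        norm (picard_z p x0 a b (Suc (Suc n)) x - picard_z p x0 a b (Suc n) x) \<le> (norm a + norm b) * (1/2)^Suc n"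
      using picard_step_bound(1)[OF holp eR M pM hol(2) hol(2) IH(1) x]
        picard_step_bound(2)[OF holp eR M pM hol(1) hol(1) IH(2) x]
      by (simp del: picard_z.simps picard_y.simps add: picard_y.simps(2) picard_z.simps(2))
  qed
qed

lemma picard_uniform_limit:
  assumes holp: "p holomorphic_on ball x0 R" and R: "R > 0"
  obtains e Y Z where "0 < e" "e < R"
    "uniform_limit (cball x0 e) (picard_y p x0 a b) Y sequentially"
    "uniform_limit (cball x0 e) (picard_z p x0 a b) Z sequentially"
proof -
  have "cball x0 (R/2) \<subseteq> ball x0 R" using R by auto
  then obtain B where "B \<ge> 0" and B: "\<And>w. w \<in> cball x0 (R/2) \<Longrightarrow> norm (p w) \<le> B"
    by (rule continuous_on_compact_bound[OF compact_cball
        continuous_on_subset[OF holomorphic_on_imp_continuous_on[OF holp]]]) blast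
  define M where "M = max B 1"
  define e where "e = min (R/2) (1/(2*M))"
  have M: "M \<ge> 1" and e: "e > 0" "e < R" "e \<le> R/2"
    using R by (auto simp: M_def e_def)
  have "e * M \<le> 1/(2*M) * M"
    using M by (intro mult_right_mono) (auto simp: e_def)
  then have eM: "e * M \<le> 1/2" using M by simp
  have pM: "norm (p w) \<le> M" if "w \<in> cball x0 e" for w
    using B[of w] that e(3) by (auto simp: M_def)
  have summ: "summable (\<lambda>n. (norm a + norm b) * (1/2::real)^n)"
    by (intro summable_mult summable_geometric) simp
  note bound = picard_increment_bound[OF holp e(2) M eM pM]
  show ?thesis
    by (rule that[OF e(1,2) uniform_limit_summable_increments[OF _ summ]
          uniform_limit_summable_increments[OF _ summ]]) (use bound in blast)+
qed

lemma picard_limit_integral_equations: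
  assumes holp: "p holomorphic_on ball x0 R" and e: "e < R"
    and ulY: "uniform_limit (cball x0 e) (picard_y p x0 a b) Y sequentially"
    and ulZ: "uniform_limit (cball x0 e) (picard_z p x0 a b) Z sequentially"
    and x: "x \<in> cball x0 e"
  shows "Y x = a + contour_integral (linepath x0 x) Z"
    and "Z x = b + contour_integral (linepath x0 x) (\<lambda>w. p w * Y w)"
proof -
  have hol: "picard_y p x0 a b n holomorphic_on ball x0 R" "picard_z p x0 a b n holomorphic_on ball x0 R" for n
    using picard_holomorphic[OF holp] by auto
  have "cball x0 e \<subseteq> ball x0 R"
    using e by auto
  then obtain M where "M \<ge> 0" and M: "\<And>w. w \<in> cball x0 e \<Longrightarrow> norm (p w) \<le> M"
    by (rule continuous_on_compact_bound[OF compact_cball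
        continuous_on_subset[OF holomorphic_on_imp_continuous_on[OF holp]]]) blast
  have "(\<lambda>n. picard_y p x0 a b (Suc n) x) \<longlonglongrightarrow> a + contour_integral (linepath x0 x) Z"
    using contour_integral_linepath_uniform_limit[OF ulZ hol(2) e x] by (simp add: tendsto_add)
  moreover have "(\<lambda>n. picard_y p x0 a b (Suc n) x) \<longlonglongrightarrow> Y x"
    using tendsto_uniform_limitI[OF ulY x] by (rule LIMSEQ_Suc)
  ultimately show "Y x = a + contour_integral (linepath x0 x) Z"
    using LIMSEQ_unique by blast
  have "(\<lambda>n. picard_z p x0 a b (Suc n) x) \<longlonglongrightarrow> b + contour_integral (linepath x0 x) (\<lambda>w. p w * Y w)"
    using contour_integral_linepath_uniform_limit[OF uniform_limit_mult_bounded[OF ulY M] _ e x]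
    by (simp add: tendsto_add hol holp holomorphic_intros)
  moreover have "(\<lambda>n. picard_z p x0 a b (Suc n) x) \<longlonglongrightarrow> Z x"
    using tendsto_uniform_limitI[OF ulZ x] by (rule LIMSEQ_Suc)
  ultimately show "Z x = b + contour_integral (linepath x0 x) (\<lambda>w. p w * Y w)"
    using LIMSEQ_unique by blast
qed

lemma linear_ode2_local_solution:
  assumes holp: "p holomorphic_on ball x0 R" and R: "R > 0"
  shows "\<exists>e>0. \<exists>y z. y x0 = a \<and> z x0 = b \<and> antidiag_solution (\<lambda>_. 1) p (ball x0 e) y z"
proof -
  obtain e Y Z where e: "0 < e" "e < R"
    and ulY: "uniform_limit (cball x0 e) (picard_y p x0 a b) Y sequentially"
    and ulZ: "uniform_limit (cball x0 e) (picard_z p x0 a b) Z sequentially"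
    using picard_uniform_limit[OF holp R] by blast
  note Y_eq = picard_limit_integral_equations(1)[OF holp e(2) ulY ulZ]
  note Z_eq = picard_limit_integral_equations(2)[OF holp e(2) ulY ulZ]
  have sub: "cball x0 e \<subseteq> ball x0 R" "ball x0 e \<subseteq> ball x0 R"
    using e by auto
  have ev: "\<forall>\<^sub>F n in sequentially. continuous_on (cball x0 e) (f n) \<and> f n holomorphic_on ball x0 e"
    if "\<And>n. f n holomorphic_on ball x0 R" for f
    using continuous_on_subset[OF holomorphic_on_imp_continuous_on[OF that] sub(1)]
      holomorphic_on_subset[OF that sub(2)] by simp
  obtain holY: "Y holomorphic_on ball x0 e"
    using holomorphic_uniform_limit[OF ev ulY] picard_holomorphic[OF holp] by auto
  obtain holZ: "Z holomorphic_on ball x0 e"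
    using holomorphic_uniform_limit[OF ev ulZ] picard_holomorphic[OF holp] by auto
  have "antidiag_solution (\<lambda>_. 1) p (ball x0 e) Y Z"
    unfolding antidiag_solution_def
  proof (intro ballI conjI)
    fix x assume x: "x \<in> ball x0 e"
    have "((\<lambda>x. a + contour_integral (linepath x0 x) Z) has_field_derivative Z x) (at x)"
      using has_field_derivative_contour_integral_linepath[OF holZ x] by (auto intro: derivative_eq_intros)
    then show "(Y has_field_derivative 1 * Z x) (at x)"
      unfolding mult_1_left
      by (rule has_field_derivative_transform_within_open[where S = "ball x0 e"]) (use x Y_eq in auto)
    have "((\<lambda>x. b + contour_integral (linepath x0 x) (\<lambda>w. p w * Y w)) has_field_derivative p x * Y x) (at x)"
      using has_field_derivative_contour_integral_linepath[OF _ x, of "\<lambda>w. p w * Y w"]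
        holomorphic_on_mult[OF holomorphic_on_subset[OF holp sub(2)] holY]
      by (auto intro: derivative_eq_intros)
    then show "(Z has_field_derivative p x * Y x) (at x)"
      by (rule has_field_derivative_transform_within_open[where S = "ball x0 e"]) (use x Z_eq in auto)
  qed
  moreover have "Y x0 = a" "Z x0 = b"
    using Y_eq[of x0] Z_eq[of x0] e by auto
  ultimately show ?thesis
    using e by blast
qed

lemma linear_ode2_fundamental_system:
  assumes holp: "p holomorphic_on ball x0 R" and R: "R > 0"
  obtains e y1 z1 y2 z2 where "0 < e" "e \<le> R"
    "antidiag_solution (\<lambda>_. 1) p (ball x0 e) y1 z1" "antidiag_solution (\<lambda>_. 1) p (ball x0 e) y2 z2"
    "\<And>x. x \<in> ball x0 e \<Longrightarrow> y1 x * z2 x - y2 x * z1 x = 1"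
proof -
  obtain e1 y1 z1 where "e1 > 0" "y1 x0 = 1" "z1 x0 = 0"
    and sol1: "antidiag_solution (\<lambda>_. 1) p (ball x0 e1) y1 z1"
    using linear_ode2_local_solution[OF holp R] by blast
  obtain e2 y2 z2 where "e2 > 0" "y2 x0 = 0" "z2 x0 = 1"
    and sol2: "antidiag_solution (\<lambda>_. 1) p (ball x0 e2) y2 z2"
    using linear_ode2_local_solution[OF holp R] by blast
  define e where "e = min (min e1 e2) R"
  have e: "e > 0" "e \<le> R"
    using \<open>e1 > 0\<close> \<open>e2 > 0\<close> R by (auto simp: e_def)
  have sol: "antidiag_solution (\<lambda>_. 1) p (ball x0 e) y1 z1" "antidiag_solution (\<lambda>_. 1) p (ball x0 e) y2 z2"
    by (auto intro: antidiag_solution_subset[OF sol1] antidiag_solution_subset[OF sol2] simp: e_def)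
  obtain c where c: "\<And>x. x \<in> ball x0 e \<Longrightarrow> y1 x * z2 x - y2 x * z1 x = c"
    by (rule antidiag_wronskian_constant[OF sol]) auto
  have "c = 1"
    using c[of x0] e \<open>y1 x0 = 1\<close> \<open>z1 x0 = 0\<close> \<open>y2 x0 = 0\<close> \<open>z2 x0 = 1\<close> by simp
  with e sol c show ?thesis
    using that by blast
qed

section \<open>Fundamental matrices with at most a pole\<close>

definition antidiag_strong_regular :: "(complex \<Rightarrow> complex) \<Rightarrow> (complex \<Rightarrow> complex) \<Rightarrow> complex \<Rightarrow> bool"
  where "antidiag_strong_regular a b x0 \<longleftrightarrow> (\<exists>e>0. \<exists>u1 v1 u2 v2.
    antidiag_solution a b (ball x0 e - {x0}) u1 v1 \<and> antidiag_solution a b (ball x0 e - {x0}) u2 v2 \<and>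
    (\<forall>x\<in>ball x0 e - {x0}. u1 x * v2 x - u2 x * v1 x \<noteq> 0) \<and>
    not_essential u1 x0 \<and> not_essential v1 x0 \<and> not_essential u2 x0 \<and> not_essential v2 x0)"

lemma antidiag_strong_regular_swap:
  assumes "antidiag_strong_regular a b x0"
  shows "antidiag_strong_regular b a x0"
proof -
  obtain e u1 v1 u2 v2 where "e > 0"
    and sol: "antidiag_solution a b (ball x0 e - {x0}) u1 v1" "antidiag_solution a b (ball x0 e - {x0}) u2 v2"
    and det: "\<forall>x\<in>ball x0 e - {x0}. u1 x * v2 x - u2 x * v1 x \<noteq> 0"
    and "not_essential u1 x0" "not_essential v1 x0" "not_essential u2 x0" "not_essential v2 x0"
    using assms unfolding antidiag_strong_regular_def by blast
  moreover have "antidiag_solution b a (ball x0 e - {x0}) v1 u1" "antidiag_solution b a (ball x0 e - {x0}) v2 u2"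
    using sol unfolding antidiag_solution_def by auto
  moreover have "\<forall>x\<in>ball x0 e - {x0}. v1 x * u2 x - v2 x * u1 x \<noteq> 0"
    using det by (metis minus_diff_eq mult.commute neg_equal_0_iff_equal)
  ultimately show ?thesis
    unfolding antidiag_strong_regular_def by blast
qed

lemma matrix_mult_2_entry:
  "((A :: 'a::comm_ring_1^2^2) ** B) $ i $ j = A $ i $ 1 * B $ 1 $ j + A $ i $ 2 * B $ 2 $ j"
  by (simp add: matrix_matrix_mult_def sum_2)

lemma strong_regular_point_antidiag_iff:
  assumes hol: "a holomorphic_on ball x0 d - {x0}" "b holomorphic_on ball x0 d - {x0}" and "d > 0"
  shows "strong_regular_point (\<lambda>x. vector [vector [0, a x], vector [b x, 0]]) x0 \<longleftrightarrow>
    antidiag_strong_regular a b x0"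
    (is "strong_regular_point ?A x0 \<longleftrightarrow> _")
proof
  assume "strong_regular_point ?A x0"
  then obtain e and W :: "complex \<Rightarrow> complex^2^2" where "e > 0" and
    W: "\<forall>x\<in>ball x0 e - {x0}. det (W x) \<noteq> 0 \<and>
      (\<forall>i j. ((\<lambda>y. W y $ i $ j) has_field_derivative (?A x ** W x) $ i $ j) (at x))"
    and ne: "\<forall>i j. not_essential (\<lambda>x. W x $ i $ j) x0"
    unfolding strong_regular_point_def by blast
  have "antidiag_solution a b (ball x0 e - {x0}) (\<lambda>x. W x $ 1 $ j) (\<lambda>x. W x $ 2 $ j)" for j
    unfolding antidiag_solution_def
  proof
    fix x assume "x \<in> ball x0 e - {x0}"
    then have "((\<lambda>y. W y $ i $ j) has_field_derivative (?A x ** W x) $ i $ j) (at x)" for i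
      using W by blast
    from this[of 1] this[of 2]
    show "((\<lambda>x. W x $ 1 $ j) has_field_derivative a x * W x $ 2 $ j) (at x) \<and>
        ((\<lambda>x. W x $ 2 $ j) has_field_derivative b x * W x $ 1 $ j) (at x)"
      by (simp add: matrix_mult_2_entry)
  qed
  moreover have "\<forall>x\<in>ball x0 e - {x0}. W x $ 1 $ 1 * W x $ 2 $ 2 - W x $ 1 $ 2 * W x $ 2 $ 1 \<noteq> 0"
    using W by (simp add: det_2)
  ultimately show "antidiag_strong_regular a b x0"
    unfolding antidiag_strong_regular_def using \<open>e > 0\<close> ne by blast
next
  assume "antidiag_strong_regular a b x0"
  then obtain e u1 v1 u2 v2 where "e > 0"
    and sol: "antidiag_solution a b (ball x0 e - {x0}) u1 v1" "antidiag_solution a b (ball x0 e - {x0}) u2 v2"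
    and det: "\<forall>x\<in>ball x0 e - {x0}. u1 x * v2 x - u2 x * v1 x \<noteq> 0"
    and ne: "not_essential u1 x0" "not_essential v1 x0" "not_essential u2 x0" "not_essential v2 x0"
    unfolding antidiag_strong_regular_def by blast
  define W where "W x = (vector [vector [u1 x, u2 x], vector [v1 x, v2 x]] :: complex^2^2)" for x
  define S where "S = ball x0 (min d e) - {x0}"
  have S: "S \<subseteq> ball x0 d - {x0}" "S \<subseteq> ball x0 e - {x0}"
    by (auto simp: S_def)
  have "\<forall>i j. (\<lambda>x. ?A x $ i $ j) holomorphic_on S"
    using holomorphic_on_subset[OF hol(1) S(1)] holomorphic_on_subset[OF hol(2) S(1)]
    by (simp add: forall_2)
  moreover have "\<forall>x\<in>S. det (W x) \<noteq> 0 \<and>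
      (\<forall>i j. ((\<lambda>y. W y $ i $ j) has_field_derivative (?A x ** W x) $ i $ j) (at x))"
    using sol det S(2) by (auto simp: W_def forall_2 det_2 matrix_mult_2_entry antidiag_solution_def)
  moreover have "\<forall>i j. not_essential (\<lambda>x. W x $ i $ j) x0"
    using ne by (simp add: W_def forall_2)
  ultimately show "strong_regular_point ?A x0"
    unfolding strong_regular_point_def S_def using \<open>d > 0\<close> \<open>e > 0\<close>
    by (intro exI[of _ "min d e"]) auto
qed

section \<open>The substitution y = s u\<close>

lemma antidiag_solution_imp_second_order:
  assumes hols: "s holomorphic_on S" and S: "open S" and nz: "\<And>x. x \<in> S \<Longrightarrow> s x \<noteq> 0"
    and sol: "antidiag_solution (\<lambda>x. \<rho> * inverse ((s x)^2)) (\<lambda>x. \<rho> * (s x)^2) S u v"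
  shows "antidiag_solution (\<lambda>_. 1) (\<lambda>x. \<rho>^2 + deriv (deriv s) x / s x) S
    (\<lambda>x. s x * u x) (\<lambda>x. deriv s x * u x + \<rho> * v x / s x)"
  unfolding antidiag_solution_def
proof
  fix x assume x: "x \<in> S"
  have ds: "(s has_field_derivative deriv s x) (at x)"
    and dds: "(deriv s has_field_derivative deriv (deriv s) x) (at x)"
    using x holomorphic_derivI[OF hols S] holomorphic_derivI[OF holomorphic_deriv[OF hols S] S] by auto
  have du: "(u has_field_derivative \<rho> * inverse ((s x)^2) * v x) (at x)"
    and dv: "(v has_field_derivative \<rho> * (s x)^2 * u x) (at x)"
    using sol x by (auto simp: antidiag_solution_def)
  show "((\<lambda>x. s x * u x) has_field_derivative 1 * (deriv s x * u x + \<rho> * v x / s x)) (at x) \<and>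
    ((\<lambda>x. deriv s x * u x + \<rho> * v x / s x) has_field_derivative
      (\<rho>^2 + deriv (deriv s) x / s x) * (s x * u x)) (at x)"
    using nz[OF x]
    by (intro conjI DERIV_cong[OF DERIV_mult[OF ds du]] DERIV_cong[OF DERIV_add[OF DERIV_mult[OF dds du]
        DERIV_divide[OF DERIV_cmult[OF dv] ds]]]) (simp_all add: field_simps power2_eq_square)
qed

lemma second_order_imp_antidiag_solution:
  assumes hols: "s holomorphic_on S" and S: "open S" and nz: "\<And>x. x \<in> S \<Longrightarrow> s x \<noteq> 0"
    and "\<rho> \<noteq> 0" and sol: "antidiag_solution (\<lambda>_. 1) (\<lambda>x. \<rho>^2 + deriv (deriv s) x / s x) S y z"
  shows "antidiag_solution (\<lambda>x. \<rho> * inverse ((s x)^2)) (\<lambda>x. \<rho> * (s x)^2) S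
    (\<lambda>x. y x / s x) (\<lambda>x. (s x * z x - deriv s x * y x) / \<rho>)"
  unfolding antidiag_solution_def
proof
  fix x assume x: "x \<in> S"
  have ds: "(s has_field_derivative deriv s x) (at x)"
    and dds: "(deriv s has_field_derivative deriv (deriv s) x) (at x)"
    using x holomorphic_derivI[OF hols S] holomorphic_derivI[OF holomorphic_deriv[OF hols S] S] by auto
  have dy: "(y has_field_derivative 1 * z x) (at x)"
    and dz: "(z has_field_derivative (\<rho>^2 + deriv (deriv s) x / s x) * y x) (at x)"
    using sol x by (auto simp: antidiag_solution_def)
  show "((\<lambda>x. y x / s x) has_field_derivative \<rho> * inverse ((s x)^2) * ((s x * z x - deriv s x * y x) / \<rho>)) (at x) \<and>
    ((\<lambda>x. (s x * z x - deriv s x * y x) / \<rho>) has_field_derivative \<rho> * (s x)^2 * (y x / s x)) (at x)"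
    using nz[OF x] \<open>\<rho> \<noteq> 0\<close>
    by (intro conjI DERIV_cong[OF DERIV_divide[OF dy ds]] DERIV_cong[OF DERIV_cdivide[OF DERIV_diff[OF
        DERIV_mult[OF ds dz] DERIV_mult[OF dds dy]]]]) (simp_all add: field_simps power2_eq_square)
qed

lemma holomorphic_factor_zero:
  assumes "f holomorphic_on ball x0 R" "R > 0" "f x0 = 0"
  obtains g where "g holomorphic_on ball x0 R" "g x0 = deriv f x0"
    "\<And>x. x \<in> ball x0 R \<Longrightarrow> f x = (x - x0) * g x"
proof
  show "(\<lambda>x. if x = x0 then deriv f x0 else (f x - f x0) / (x - x0)) holomorphic_on ball x0 R"
    by (rule pole_lemma[OF assms(1)]) (use assms(2) in simp)
qed (use assms(3) in auto)

lemma simple_zero_factor: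
  assumes hols: "s holomorphic_on ball x0 R" and R: "R > 0" and s0: "s x0 = 0" and s1: "deriv s x0 \<noteq> 0"
  obtains d h where "0 < d" "d \<le> R" "h holomorphic_on ball x0 d"
    "\<And>x. x \<in> ball x0 d \<Longrightarrow> s x = (x - x0) * h x" "\<And>x. x \<in> ball x0 d \<Longrightarrow> h x \<noteq> 0"
proof -
  obtain h where holh: "h holomorphic_on ball x0 R" and h0: "h x0 = deriv s x0"
    and sh: "\<And>x. x \<in> ball x0 R \<Longrightarrow> s x = (x - x0) * h x"
    using holomorphic_factor_zero[OF hols R s0] by blast
  have "isCont h x0"
    using holomorphic_on_imp_continuous_on[OF holh] R by (simp add: continuous_on_eq_continuous_at)
  then obtain d where "d > 0" and d: "\<And>x. dist x0 x < d \<Longrightarrow> h x \<noteq> 0"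
    using continuous_at_avoid[of x0 h] h0 s1 by auto
  show ?thesis
  proof
    show "h holomorphic_on ball x0 (min d R)"
      by (rule holomorphic_on_subset[OF holh]) auto
  qed (use \<open>d > 0\<close> R d sh in auto)
qed

section \<open>Regular singular points with exponents 0 and 1\<close>

lemma continuous_on_ball_eq_at_centre:
  fixes f g :: "complex \<Rightarrow> complex"
  assumes "d > 0" "continuous_on (ball x0 d) f" "continuous_on (ball x0 d) g"
    and "\<And>w. w \<in> ball x0 d - {x0} \<Longrightarrow> f w = g w"
  shows "f x0 = g x0"
proof -
  have "(f \<longlongrightarrow> f x0) (at x0)" "(g \<longlongrightarrow> g x0) (at x0)"
    using assms(1-3) by (auto simp: continuous_on_eq_continuous_at isCont_def)
  moreover have "\<forall>\<^sub>F w in at x0. f w = g w"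
    using assms(1,4) by (auto simp: eventually_at dist_commute)
  ultimately show ?thesis
    by (metis LIM_unique tendsto_cong)
qed

lemma has_field_derivative_zorder_form:
  assumes "g holomorphic_on S" "open S" "w \<in> S" "w \<noteq> x0"
  shows "((\<lambda>w. g w * (w - x0) powi n) has_field_derivative
    deriv g w * (w - x0) powi n + g w * (of_int n * (w - x0) powi (n - 1))) (at w)"
  using assms by (auto intro!: derivative_eq_intros holomorphic_derivI)

lemma antidiag_solution_zorder_form_deriv:
  assumes sol: "antidiag_solution a b S (\<lambda>w. g w * (w - x0) powi n) z"
    and "g holomorphic_on S" "open S" "x0 \<notin> S" "w \<in> S"
  shows "a w * z w = deriv g w * (w - x0) powi n + g w * (of_int n * (w - x0) powi (n - 1))"
  using sol assms(5) has_field_derivative_zorder_form[OF assms(2,3,5)] assms(4,5)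
  by (force simp: antidiag_solution_def intro: DERIV_unique)

lemma zorder_form_solution_indicial:
  assumes holg: "g holomorphic_on S" and S: "open S" "x0 \<notin> S"
    and sol: "antidiag_solution (\<lambda>_. 1) (\<lambda>w. q w / (w - x0)) S (\<lambda>w. g w * (w - x0) powi n) z"
    and w: "w \<in> S"
  shows "of_int n * (of_int n - 1) * g w + (w - x0) * (2 * of_int n * deriv g w + (w - x0) * deriv (deriv g) w)
    = (w - x0) * q w * g w"
proof -
  define t where "t = w - x0"
  have wx: "w \<noteq> x0" using w S(2) by auto
  then have t: "t \<noteq> 0" by (simp add: t_def)
  have holg1: "deriv g holomorphic_on S"
    by (rule holomorphic_deriv[OF holg S(1)])
  have z_eq: "z v = deriv g v * (v - x0) powi n + g v * (of_int n * (v - x0) powi (n - 1))" if "v \<in> S" for v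
    using antidiag_solution_zorder_form_deriv[OF sol holg S that] by simp
  have "((\<lambda>w. deriv g w * (w - x0) powi n + of_int n * (g w * (w - x0) powi (n - 1))) has_field_derivative
      (deriv (deriv g) w * t powi n + deriv g w * (of_int n * t powi (n - 1))) +
      of_int n * (deriv g w * t powi (n - 1) + g w * (of_int (n - 1) * t powi (n - 1 - 1)))) (at w)"
    unfolding t_def
    by (intro DERIV_add DERIV_cmult has_field_derivative_zorder_form[OF holg1 S(1) w wx]
        has_field_derivative_zorder_form[OF holg S(1) w wx])
  moreover have "(z has_field_derivative q w / t * (g w * t powi n)) (at w)"
    using sol w by (simp add: antidiag_solution_def t_def)
  then have "((\<lambda>w. deriv g w * (w - x0) powi n + of_int n * (g w * (w - x0) powi (n - 1)))
      has_field_derivative q w / t * (g w * t powi n)) (at w)"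
    by (rule has_field_derivative_transform_within_open[OF _ S(1) w]) (simp add: z_eq mult_ac)
  ultimately have "(deriv (deriv g) w * t powi n + deriv g w * (of_int n * t powi (n - 1))) +
      of_int n * (deriv g w * t powi (n - 1) + g w * (of_int (n - 1) * t powi (n - 1 - 1)))
      = q w / t * (g w * t powi n)"
    by (rule DERIV_unique)
  moreover have "t powi n = t powi (n - 2) * t^2" "t powi (n - 1) = t powi (n - 2) * t"
    "t powi (n - 1 - 1) = t powi (n - 2)"
    using power_int_add[of t "n - 2" 2] power_int_add[of t "n - 2" 1] t by simp_all
  ultimately have "t powi (n - 2) * (of_int n * (of_int n - 1) * g w + t * (2 * of_int n * deriv g w + t * deriv (deriv g) w))
      = t powi (n - 2) * (t * q w * g w)"
    using t by (simp add: field_simps power2_eq_square)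
  then show ?thesis
    using t by (simp add: t_def)
qed

(* At x0 the indicial identity reads n (n - 1) g x0 = 0; for n = 0 it reduces to
   (w - x0) g'' = q g, which fails at x0 because q x0 g x0 \<noteq> 0. *)
lemma regular_singular_exponent_eq_1:
  assumes e: "e > 0" and holg: "g holomorphic_on ball x0 e" and g0: "g x0 \<noteq> 0"
    and holq: "q holomorphic_on ball x0 e" and q0: "q x0 \<noteq> 0"
    and sol: "antidiag_solution (\<lambda>_. 1) (\<lambda>w. q w / (w - x0)) (ball x0 e - {x0}) (\<lambda>w. g w * (w - x0) powi n) z"
  shows "n = 1"
proof -
  have holg1: "deriv g holomorphic_on ball x0 e" and holg2: "deriv (deriv g) holomorphic_on ball x0 e"
    using holg by (auto intro!: holomorphic_deriv)
  have cont: "continuous_on (ball x0 e) f" if "f holomorphic_on ball x0 e" for f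
    using that by (rule holomorphic_on_imp_continuous_on)
  have indicial: "of_int n * (of_int n - 1) * g w + (w - x0) * (2 * of_int n * deriv g w + (w - x0) * deriv (deriv g) w)
      = (w - x0) * q w * g w" if "w \<in> ball x0 e - {x0}" for w
    by (rule zorder_form_solution_indicial[OF holomorphic_on_subset[OF holg] _ _ sol that]) auto
  have "of_int n * (of_int n - 1) * g x0 + (x0 - x0) * (2 * of_int n * deriv g x0 + (x0 - x0) * deriv (deriv g) x0)
      = (x0 - x0) * q x0 * g x0"
    by (rule continuous_on_ball_eq_at_centre[OF e, where
          f = "\<lambda>w. of_int n * (of_int n - 1) * g w + (w - x0) * (2 * of_int n * deriv g w + (w - x0) * deriv (deriv g) w)"
          and g = "\<lambda>w. (w - x0) * q w * g w"])
      (use indicial in \<open>auto intro!: cont holomorphic_intros holg holg1 holg2 holq\<close>)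
  then have "n = 0 \<or> n = 1"
    using g0 by simp
  moreover have "n \<noteq> 0"
  proof
    assume "n = 0"
    have E0: "(w - x0) * deriv (deriv g) w = q w * g w" if "w \<in> ball x0 e - {x0}" for w
    proof -
      have "(w - x0) * ((w - x0) * deriv (deriv g) w) = (w - x0) * (q w * g w)"
        using indicial[of w] that \<open>n = 0\<close> by (simp add: mult.assoc)
      then show ?thesis
        using that by simp
    qed
    have "(x0 - x0) * deriv (deriv g) x0 = q x0 * g x0"
      by (rule continuous_on_ball_eq_at_centre[OF e, where f = "\<lambda>w. (w - x0) * deriv (deriv g) w"
            and g = "\<lambda>w. q w * g w"]) (use E0 in \<open>auto intro!: cont holomorphic_intros holg holg2 holq\<close>)
    then show False
      using q0 g0 by simp
  qed
  ultimately show ?thesis by blast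
qed

lemma antidiag_solution_eventually_zero:
  assumes sol: "antidiag_solution (\<lambda>_. 1) b (ball x0 d - {x0}) y z" and d: "d > 0"
    and y0: "\<forall>\<^sub>F w in at x0. y w = 0"
  shows "\<forall>\<^sub>F w in at x0. z w = 0"
proof -
  obtain d1 where "d1 > 0" and y0: "\<And>w. w \<in> ball x0 d1 - {x0} \<Longrightarrow> y w = 0"
    using y0 by (auto simp: eventually_at dist_commute)
  define S where "S = ball x0 (min d d1) - {x0}"
  have z0: "z w = 0" if "w \<in> S" for w
  proof -
    have "(y has_field_derivative 1 * z w) (at w)"
      using sol that by (auto simp: antidiag_solution_def S_def)
    moreover have "(y has_field_derivative 0) (at w)"
      by (rule has_field_derivative_transform_within_open[where f = "\<lambda>_. 0" and S = S])
        (use that y0 in \<open>auto simp: S_def\<close>)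
    ultimately show ?thesis
      using DERIV_unique by force
  qed
  then show ?thesis
    unfolding eventually_at using d \<open>d1 > 0\<close>
    by (intro exI[of _ "min d d1"]) (auto simp: S_def dist_commute)
qed

lemma regular_singular_solution_limits:
  assumes d: "d > 0"
    and sol: "antidiag_solution (\<lambda>_. 1) (\<lambda>w. q w / (w - x0)) (ball x0 d - {x0}) y z"
    and holq: "q holomorphic_on ball x0 d" and q0: "q x0 \<noteq> 0" and ne: "not_essential y x0"
  shows "(y \<longlongrightarrow> 0) (at x0) \<and> (\<exists>L. (z \<longlongrightarrow> L) (at x0))"
proof (cases "\<exists>\<^sub>F w in at x0. y w \<noteq> 0")
  case False
  then have "\<forall>\<^sub>F w in at x0. y w = 0"
    by (simp add: not_frequently)
  moreover from this have "\<forall>\<^sub>F w in at x0. z w = 0"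
    by (rule antidiag_solution_eventually_zero[OF sol d])
  ultimately show ?thesis
    by (auto intro!: tendsto_eventually)
next
  case True
  have "y holomorphic_on ball x0 d - {x0}"
    using antidiag_solution_holomorphic(1)[OF sol] by auto
  then have "isolated_singularity_at y x0"
    by (rule isolated_singularity_at_holomorphic) (use d in auto)
  then obtain r where g0: "zor_poly y x0 x0 \<noteq> 0" and "r > 0"
    and holg: "zor_poly y x0 holomorphic_on cball x0 r"
    and yg: "\<And>w. w \<in> cball x0 r - {x0} \<Longrightarrow> y w = zor_poly y x0 w * (w - x0) powi zorder y x0"
    using zorder_exist[OF _ ne True] by blast
  define g where "g = zor_poly y x0"
  define e where "e = min r d"
  have e: "e > 0" using d \<open>r > 0\<close> by (simp add: e_def)
  have holg: "g holomorphic_on ball x0 e"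
    using holg unfolding g_def by (rule holomorphic_on_subset) (auto simp: e_def)
  have sol_g: "antidiag_solution (\<lambda>_. 1) (\<lambda>w. q w / (w - x0)) (ball x0 e - {x0})
      (\<lambda>w. g w * (w - x0) powi zorder y x0) z"
    by (rule antidiag_solution_transform[OF antidiag_solution_subset[OF sol]])
      (auto simp: e_def g_def yg)
  have "zorder y x0 = 1"
    by (rule regular_singular_exponent_eq_1[OF e holg _ _ q0 sol_g])
      (use g0 holq in \<open>auto simp: g_def e_def intro: holomorphic_on_subset\<close>)
  then have y_eq: "y w = g w * (w - x0)" and z_eq: "z w = deriv g w * (w - x0) + g w"
    if "w \<in> ball x0 e - {x0}" for w
    using yg[of w] antidiag_solution_zorder_form_deriv[OF sol_g holomorphic_on_subset[OF holg] _ _ that]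
      that by (auto simp: e_def g_def)
  have "isCont g x0" "isCont (deriv g) x0"
    using holomorphic_on_imp_continuous_on[OF holg] holomorphic_on_imp_continuous_on[OF holomorphic_deriv[OF holg]] e
    by (auto simp: continuous_on_eq_continuous_at)
  then have "((\<lambda>w. g w * (w - x0)) \<longlongrightarrow> 0) (at x0)"
    and "((\<lambda>w. deriv g w * (w - x0) + g w) \<longlongrightarrow> g x0) (at x0)"
    by (auto intro!: tendsto_eq_intros simp: isCont_def)
  moreover have "\<forall>\<^sub>F w in at x0. g w * (w - x0) = y w"
    and "\<forall>\<^sub>F w in at x0. deriv g w * (w - x0) + g w = z w"
    unfolding eventually_at using e y_eq z_eq by (auto simp: dist_commute intro!: exI[of _ e])
  ultimately show ?thesis
    using Lim_transform_eventually by blast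
qed

lemma regular_singular_wronskian_eq_0:
  assumes d: "d > 0" and holq: "q holomorphic_on ball x0 d" and q0: "q x0 \<noteq> 0"
    and sol1: "antidiag_solution (\<lambda>_. 1) (\<lambda>w. q w / (w - x0)) (ball x0 d - {x0}) y1 z1"
    and sol2: "antidiag_solution (\<lambda>_. 1) (\<lambda>w. q w / (w - x0)) (ball x0 d - {x0}) y2 z2"
    and ne: "not_essential y1 x0" "not_essential y2 x0"
    and w: "w \<in> ball x0 d - {x0}"
  shows "y1 w * z2 w - y2 w * z1 w = 0"
proof -
  obtain c where c: "\<And>x. x \<in> ball x0 d - {x0} \<Longrightarrow> y1 x * z2 x - y2 x * z1 x = c"
    by (rule antidiag_wronskian_constant[OF sol1 sol2]) (use connected_punctured_ball[of x0 d] in auto)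
  obtain L1 L2 where "(y1 \<longlongrightarrow> 0) (at x0)" "(z1 \<longlongrightarrow> L1) (at x0)" "(y2 \<longlongrightarrow> 0) (at x0)" "(z2 \<longlongrightarrow> L2) (at x0)"
    using regular_singular_solution_limits[OF d _ holq q0] sol1 sol2 ne by metis
  then have "((\<lambda>x. y1 x * z2 x - y2 x * z1 x) \<longlongrightarrow> 0 * L2 - 0 * L1) (at x0)"
    by (intro tendsto_intros)
  moreover have "\<forall>\<^sub>F x in at x0. y1 x * z2 x - y2 x * z1 x = c"
    unfolding eventually_at using d c by (intro exI[of _ d]) (auto simp: dist_commute)
  then have "((\<lambda>x. y1 x * z2 x - y2 x * z1 x) \<longlongrightarrow> c) (at x0)"
    by (rule tendsto_eventually)
  ultimately have "c = 0"
    using LIM_unique by fastforce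
  then show ?thesis
    using c[OF w] by simp
qed

section \<open>Strong regularity at a simple zero\<close>

lemma antidiag_solution_imp_regular_singular:
  assumes hols: "s holomorphic_on ball x0 d" and sh: "\<And>x. x \<in> ball x0 d \<Longrightarrow> s x = (x - x0) * h x"
    and h0: "\<And>x. x \<in> ball x0 d \<Longrightarrow> h x \<noteq> 0"
    and sol: "antidiag_solution (\<lambda>x. inverse ((s x)^2)) (\<lambda>x. (s x)^2) (ball x0 d - {x0}) u v"
  shows "antidiag_solution (\<lambda>_. 1) (\<lambda>x. (x - x0 + deriv (deriv s) x / h x) / (x - x0)) (ball x0 d - {x0})
    (\<lambda>x. s x * u x) (\<lambda>x. deriv s x * u x + v x / s x)"
proof -
  have nz: "s x \<noteq> 0" if "x \<in> ball x0 d - {x0}" for x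
    using that sh h0 by force
  have "antidiag_solution (\<lambda>x. 1 * inverse ((s x)^2)) (\<lambda>x. 1 * (s x)^2) (ball x0 d - {x0}) u v"
    using sol by simp
  from antidiag_solution_imp_second_order[OF holomorphic_on_subset[OF hols] _ nz this]
  have "antidiag_solution (\<lambda>_. 1) (\<lambda>x. 1^2 + deriv (deriv s) x / s x) (ball x0 d - {x0})
      (\<lambda>x. s x * u x) (\<lambda>x. deriv s x * u x + 1 * v x / s x)"
    by auto
  then have "antidiag_solution (\<lambda>_. 1) (\<lambda>x. (x - x0 + deriv (deriv s) x / h x) / (x - x0)) (ball x0 d - {x0})
      (\<lambda>x. s x * u x) (\<lambda>x. deriv s x * u x + 1 * v x / s x)"
    by (rule antidiag_solution_coeff_cong) (use h0 in \<open>auto simp: sh field_simps\<close>)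
  then show ?thesis
    by simp
qed

lemma second_deriv_eq_0_if_antidiag_strong_regular:
  assumes hols: "s holomorphic_on ball x0 R" and R: "R > 0" and s0: "s x0 = 0" and s1: "deriv s x0 \<noteq> 0"
    and reg: "antidiag_strong_regular (\<lambda>x. inverse ((s x)^2)) (\<lambda>x. (s x)^2) x0"
  shows "deriv (deriv s) x0 = 0"
proof (rule ccontr)
  assume s2: "deriv (deriv s) x0 \<noteq> 0"
  obtain d h where "0 < d" "d \<le> R" and holh: "h holomorphic_on ball x0 d"
    and sh: "\<And>x. x \<in> ball x0 d \<Longrightarrow> s x = (x - x0) * h x" and h0: "\<And>x. x \<in> ball x0 d \<Longrightarrow> h x \<noteq> 0"
    using simple_zero_factor[OF hols R s0 s1] by blast
  obtain e u1 v1 u2 v2 where "e > 0"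
    and sol: "antidiag_solution (\<lambda>x. inverse ((s x)^2)) (\<lambda>x. (s x)^2) (ball x0 e - {x0}) u1 v1"
      "antidiag_solution (\<lambda>x. inverse ((s x)^2)) (\<lambda>x. (s x)^2) (ball x0 e - {x0}) u2 v2"
    and det: "\<forall>x\<in>ball x0 e - {x0}. u1 x * v2 x - u2 x * v1 x \<noteq> 0"
    and ne: "not_essential u1 x0" "not_essential u2 x0"
    using reg unfolding antidiag_strong_regular_def by blast
  define r where "r = min d e"
  have r: "r > 0" "ball x0 r \<subseteq> ball x0 d" "ball x0 r \<subseteq> ball x0 R" "ball x0 r - {x0} \<subseteq> ball x0 e - {x0}"
    using \<open>0 < d\<close> \<open>d \<le> R\<close> \<open>e > 0\<close> by (auto simp: r_def)
  have holsr: "s holomorphic_on ball x0 r"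
    using hols r(3) by (rule holomorphic_on_subset)
  define q where "q x = x - x0 + deriv (deriv s) x / h x" for x
  have holq: "q holomorphic_on ball x0 r"
    unfolding q_def using h0 r(2) by (auto intro!: holomorphic_intros holomorphic_on_subset[OF holh r(2)] holsr)
  have q0: "q x0 \<noteq> 0"
    using s2 h0[of x0] \<open>0 < d\<close> by (simp add: q_def)
  have y_sol: "antidiag_solution (\<lambda>_. 1) (\<lambda>x. q x / (x - x0)) (ball x0 r - {x0})
      (\<lambda>x. s x * u x) (\<lambda>x. deriv s x * u x + v x / s x)"
    if "antidiag_solution (\<lambda>x. inverse ((s x)^2)) (\<lambda>x. (s x)^2) (ball x0 e - {x0}) u v" for u v
    using antidiag_solution_imp_regular_singular[OF holsr _ _ antidiag_solution_subset[OF that r(4)]] sh h0 r(2)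
    unfolding q_def by blast
  have y_ne: "not_essential (\<lambda>x. s x * u x) x0"
    if "antidiag_solution (\<lambda>x. inverse ((s x)^2)) (\<lambda>x. (s x)^2) (ball x0 e - {x0}) u v"
      "not_essential u x0" for u v
  proof (rule not_essential_times)
    show "not_essential s x0" "isolated_singularity_at s x0"
      using hols R by (auto intro: not_essential_holomorphic isolated_singularity_at_holomorphic)
    show "isolated_singularity_at u x0"
      using isolated_singularity_at_holomorphic[OF
          antidiag_solution_holomorphic(1)[OF that(1) open_delete[OF open_ball]] open_ball] \<open>e > 0\<close>
      by simp
  qed fact
  define x where "x = x0 + of_real (r / 2)"
  have x: "x \<in> ball x0 r - {x0}"
    using r(1) by (simp add: x_def dist_norm)
  then have "x \<in> ball x0 d"
    using r(2) by blast
  have "s x * u1 x * (deriv s x * u2 x + v2 x / s x) - s x * u2 x * (deriv s x * u1 x + v1 x / s x) = 0"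
    using regular_singular_wronskian_eq_0[OF r(1) holq q0 y_sol[OF sol(1)] y_sol[OF sol(2)]
        y_ne[OF sol(1) ne(1)] y_ne[OF sol(2) ne(2)] x] .
  moreover have "s x \<noteq> 0"
    using sh[OF \<open>x \<in> ball x0 d\<close>] h0[OF \<open>x \<in> ball x0 d\<close>] x by simp
  ultimately have "u1 x * v2 x - u2 x * v1 x = 0"
    by (simp add: field_simps)
  then show False
    using det x r(4) by blast
qed

lemma antidiag_strong_regular_zero: "antidiag_strong_regular (\<lambda>_. 0) (\<lambda>_. 0) x0"
proof -
  have sol: "antidiag_solution (\<lambda>_. 0) (\<lambda>_. 0) (ball x0 1 - {x0}) (\<lambda>_. c) (\<lambda>_. c')" for c c'
    by (simp add: antidiag_solution_def)
  show ?thesis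
    unfolding antidiag_strong_regular_def
  proof (intro exI conjI)
    show "antidiag_solution (\<lambda>_. 0) (\<lambda>_. 0) (ball x0 1 - {x0}) (\<lambda>_. 1) (\<lambda>_. 0)"
      "antidiag_solution (\<lambda>_. 0) (\<lambda>_. 0) (ball x0 1 - {x0}) (\<lambda>_. 0) (\<lambda>_. 1)"
      by (rule sol)+
  qed (auto intro: not_essential_const)
qed

lemma antidiag_strong_regular_if_second_order_fundamental:
  assumes hols: "s holomorphic_on ball x0 e" and "e > 0" and "\<rho> \<noteq> 0"
    and nz: "\<And>x. x \<in> ball x0 e - {x0} \<Longrightarrow> s x \<noteq> 0"
    and coeff: "\<And>x. x \<in> ball x0 e - {x0} \<Longrightarrow> p x = \<rho>^2 + deriv (deriv s) x / s x"
    and sol: "antidiag_solution (\<lambda>_. 1) p (ball x0 e) y1 z1" "antidiag_solution (\<lambda>_. 1) p (ball x0 e) y2 z2"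
    and W: "\<And>x. x \<in> ball x0 e - {x0} \<Longrightarrow> y1 x * z2 x - y2 x * z1 x \<noteq> 0"
  shows "antidiag_strong_regular (\<lambda>x. \<rho> * inverse ((s x)^2)) (\<lambda>x. \<rho> * (s x)^2) x0"
proof -
  define S where "S = ball x0 e - {x0}"
  have S: "open S" "S \<subseteq> ball x0 e"
    by (auto simp: S_def)
  have u_sol: "antidiag_solution (\<lambda>x. \<rho> * inverse ((s x)^2)) (\<lambda>x. \<rho> * (s x)^2) S
      (\<lambda>x. y x / s x) (\<lambda>x. (s x * z x - deriv s x * y x) / \<rho>)"
    if "antidiag_solution (\<lambda>_. 1) p (ball x0 e) y z" for y z
  proof -
    have "antidiag_solution (\<lambda>_. 1) (\<lambda>x. \<rho>^2 + deriv (deriv s) x / s x) S y z"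
      using antidiag_solution_subset[OF that S(2)] coeff unfolding S_def by (rule antidiag_solution_coeff_cong)
    with holomorphic_on_subset[OF hols S(2)] S(1) nz \<open>\<rho> \<noteq> 0\<close> show ?thesis
      unfolding S_def by (rule second_order_imp_antidiag_solution)
  qed
  define u1 where "u1 = (\<lambda>x. y1 x / s x)"
  define v1 where "v1 = (\<lambda>x. (s x * z1 x - deriv s x * y1 x) / \<rho>)"
  define u2 where "u2 = (\<lambda>x. y2 x / s x)"
  define v2 where "v2 = (\<lambda>x. (s x * z2 x - deriv s x * y2 x) / \<rho>)"
  have det: "u1 x * v2 x - u2 x * v1 x \<noteq> 0" if "x \<in> S" for x
  proof -
    have "u1 x * v2 x - u2 x * v1 x = (y1 x * z2 x - y2 x * z1 x) / \<rho>"
      using nz that \<open>\<rho> \<noteq> 0\<close> by (simp add: S_def u1_def v1_def u2_def v2_def field_simps)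
    then show ?thesis
      using W that \<open>\<rho> \<noteq> 0\<close> by (simp add: S_def)
  qed
  have ne_e: "not_essential f x0" and iso_e: "isolated_singularity_at f x0"
    if "f holomorphic_on ball x0 e" for f
    using that \<open>0 < e\<close> by (auto intro: not_essential_holomorphic isolated_singularity_at_holomorphic)
  have holds: "deriv s holomorphic_on ball x0 e"
    using holomorphic_deriv[OF hols open_ball] .
  have ne: "not_essential (\<lambda>x. y x / s x) x0" "not_essential (\<lambda>x. (s x * z x - deriv s x * y x) / \<rho>) x0"
    if "antidiag_solution (\<lambda>_. 1) p (ball x0 e) y z" for y z
  proof -
    have holy: "y holomorphic_on ball x0 e" and holz: "z holomorphic_on ball x0 e"
      using antidiag_solution_holomorphic[OF that open_ball] by auto
    show "not_essential (\<lambda>x. y x / s x) x0"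
      by (intro not_essential_divide ne_e iso_e holy hols)
    show "not_essential (\<lambda>x. (s x * z x - deriv s x * y x) / \<rho>) x0"
      using \<open>\<rho> \<noteq> 0\<close> by (intro ne_e holomorphic_intros holy holz hols holds)
  qed
  show ?thesis
    unfolding antidiag_strong_regular_def
    using \<open>0 < e\<close> u_sol[OF sol(1), folded u1_def v1_def] u_sol[OF sol(2), folded u2_def v2_def] det
      ne[OF sol(1), folded u1_def v1_def] ne[OF sol(2), folded u2_def v2_def]
    unfolding S_def by blast
qed

lemma antidiag_strong_regular_if_second_deriv_eq_0:
  assumes hols: "s holomorphic_on ball x0 R" and R: "R > 0" and s0: "s x0 = 0" and s1: "deriv s x0 \<noteq> 0"
    and s2: "deriv (deriv s) x0 = 0"
  shows "antidiag_strong_regular (\<lambda>x. \<rho> * inverse ((s x)^2)) (\<lambda>x. \<rho> * (s x)^2) x0"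
proof (cases "\<rho> = 0")
  case True
  then show ?thesis
    using antidiag_strong_regular_zero by simp
next
  case False
  obtain d h where d: "0 < d" "d \<le> R" and holh: "h holomorphic_on ball x0 d"
    and sh: "\<And>x. x \<in> ball x0 d \<Longrightarrow> s x = (x - x0) * h x" and h0: "\<And>x. x \<in> ball x0 d \<Longrightarrow> h x \<noteq> 0"
    using simple_zero_factor[OF hols R s0 s1] by blast
  have holsd: "s holomorphic_on ball x0 d"
    using hols d by (auto intro: holomorphic_on_subset)
  then have hol2: "deriv (deriv s) holomorphic_on ball x0 d"
    by (intro holomorphic_deriv open_ball)
  obtain g where holg: "g holomorphic_on ball x0 d"
    and sg: "\<And>x. x \<in> ball x0 d \<Longrightarrow> deriv (deriv s) x = (x - x0) * g x"
    using holomorphic_factor_zero[OF hol2 d(1) s2] by blast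
  define p where "p x = \<rho>^2 + g x / h x" for x
  have "p holomorphic_on ball x0 d"
    unfolding p_def using h0 by (intro holomorphic_intros holg holh)
  then obtain e y1 z1 y2 z2 where "0 < e" "e \<le> d"
    and sol: "antidiag_solution (\<lambda>_. 1) p (ball x0 e) y1 z1" "antidiag_solution (\<lambda>_. 1) p (ball x0 e) y2 z2"
    and W: "\<And>x. x \<in> ball x0 e \<Longrightarrow> y1 x * z2 x - y2 x * z1 x = 1"
    by (rule linear_ode2_fundamental_system[OF _ d(1)]) blast
  show ?thesis
  proof (rule antidiag_strong_regular_if_second_order_fundamental[OF _ \<open>0 < e\<close> False _ _ sol])
    show "s holomorphic_on ball x0 e"
      using holsd \<open>e \<le> d\<close> by (auto intro: holomorphic_on_subset)
    fix x assume "x \<in> ball x0 e - {x0}"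
    then have x: "x \<in> ball x0 d" "x \<noteq> x0" and "x \<in> ball x0 e"
      using \<open>e \<le> d\<close> by auto
    then show "s x \<noteq> 0" "p x = \<rho>^2 + deriv (deriv s) x / s x" "y1 x * z2 x - y2 x * z1 x \<noteq> 0"
      using h0[OF x(1)] W by (simp_all add: sh[OF x(1)] sg[OF x(1)] p_def)
  qed
qed

lemma simple_zero_antidiag_strong_regular_iff:
  assumes "s holomorphic_on ball x0 R" "R > 0" "s x0 = 0" "deriv s x0 \<noteq> 0"
  shows "(\<forall>\<rho>. antidiag_strong_regular (\<lambda>x. \<rho> * inverse ((s x)^2)) (\<lambda>x. \<rho> * (s x)^2) x0) \<longleftrightarrow>
    deriv (deriv s) x0 = 0"
proof
  assume "\<forall>\<rho>. antidiag_strong_regular (\<lambda>x. \<rho> * inverse ((s x)^2)) (\<lambda>x. \<rho> * (s x)^2) x0"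
  from this[rule_format, of 1] have "antidiag_strong_regular (\<lambda>x. inverse ((s x)^2)) (\<lambda>x. (s x)^2) x0"
    by simp
  then show "deriv (deriv s) x0 = 0"
    by (rule second_deriv_eq_0_if_antidiag_strong_regular[OF assms])
qed (use antidiag_strong_regular_if_second_deriv_eq_0[OF assms] in blast)

section \<open>Simple zeros and poles of a meromorphic function\<close>

lemma deriv_nonzero_if_zorder_eq_1:
  assumes holf: "f holomorphic_on ball z R" and R: "R > 0" and f0: "f z = 0"
    and nz: "\<exists>\<^sub>F w in at z. f w \<noteq> 0" and zo: "zorder f z = 1"
  shows "deriv f z \<noteq> 0"
proof -
  have z: "z \<in> ball z R" using R by simp
  have "isolated_singularity_at f z" "not_essential f z"
    using holf z by (auto intro: isolated_singularity_at_holomorphic not_essential_holomorphic)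
  then obtain r where g0: "zor_poly f z z \<noteq> 0" and "r > 0" and holg: "zor_poly f z holomorphic_on cball z r"
    and fg: "\<And>w. w \<in> cball z r - {z} \<Longrightarrow> f w = zor_poly f z w * (w - z) powi 1"
    using zorder_exist[OF _ _ nz] zo by metis
  define d where "d = min r R"
  have d: "d > 0" "z \<in> ball z d"
    using \<open>r > 0\<close> R by (auto simp: d_def)
  have holgd: "zor_poly f z holomorphic_on ball z d"
    by (rule holomorphic_on_subset[OF holg]) (auto simp: d_def)
  have "((\<lambda>w. (w - z) * zor_poly f z w) has_field_derivative zor_poly f z z) (at z)"
    using holomorphic_derivI[OF holgd open_ball d(2)] by (auto intro!: derivative_eq_intros)
  moreover have "(w - z) * zor_poly f z w = f w" if "w \<in> ball z d" for w
    using f0 fg[of w] that by (cases "w = z") (auto simp: d_def)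
  ultimately have "(f has_field_derivative zor_poly f z z) (at z)"
    using has_field_derivative_transform_within_open[OF _ open_ball d(2)] by blast
  then show ?thesis
    using g0 DERIV_imp_deriv by fastforce
qed

lemma nicely_meromorphic_simple_zero:
  assumes mero: "r nicely_meromorphic_on A" and "z \<in> A" "\<not> is_pole r z" "r z = 0"
    and "zorder r z = 1" and "\<exists>\<^sub>F x in at z. r x \<noteq> 0"
  obtains R where "R > 0" "r holomorphic_on ball z R" "deriv r z \<noteq> 0"
proof -
  have "r analytic_on {z}"
    using nicely_meromorphic_on_imp_analytic_at[OF mero] assms by blast
  then obtain R where "R > 0" and hol: "r holomorphic_on ball z R"
    unfolding analytic_on_def by blast
  with deriv_nonzero_if_zorder_eq_1[OF hol] assms that show ?thesis
    by blast
qed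

lemma nicely_meromorphic_simple_pole:
  assumes mero: "r nicely_meromorphic_on A" and z: "z \<in> A" and pole: "is_pole r z"
    and zo: "zorder r z = -1" and nz: "\<forall>\<^sub>F x in at z. r x \<noteq> 0"
  obtains R where "R > 0" "(\<lambda>x. inverse (r x)) holomorphic_on ball z R"
    "inverse (r z) = 0" "deriv (\<lambda>x. inverse (r x)) z \<noteq> 0"
proof -
  have inv0: "inverse (r z) = 0"
    using is_pole_zero_at_nicely_mero[OF mero pole z] by simp
  show ?thesis
  proof (rule nicely_meromorphic_simple_zero[OF nicely_meromorphic_on_inverse[OF mero] z _ inv0])
    show "\<not> is_pole (\<lambda>x. inverse (r x)) z"
      unfolding is_pole_inverse_iff using pole_is_not_zero[OF pole] .
    have "r meromorphic_on {z}"
      using mero z by (auto simp: nicely_meromorphic_on_def intro: meromorphic_on_subset)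
    then show "zorder (\<lambda>x. inverse (r x)) z = 1"
      using zorder_inverse[of r z] zo nz by (auto simp: meromorphic_at_iff eventually_frequently)
    show "\<exists>\<^sub>F x in at z. inverse (r x) \<noteq> 0"
      using nz by (auto simp: eventually_frequently)
  qed (use that inv0 in blast)
qed

lemma strong_regular_point_sysA_iff:
  assumes iso: "isolated_singularity_at r z" and nz: "\<forall>\<^sub>F x in at z. r x \<noteq> 0"
  shows "strong_regular_point (sysA r \<rho>) z \<longleftrightarrow>
    antidiag_strong_regular (\<lambda>x. \<rho> * inverse ((r x)^2)) (\<lambda>x. \<rho> * (r x)^2) z"
proof -
  obtain d1 where "d1 > 0" and "r analytic_on ball z d1 - {z}"
    using iso unfolding isolated_singularity_at_def by blast
  then have hol: "r holomorphic_on ball z d1 - {z}"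
    by (simp add: analytic_imp_holomorphic)
  obtain d2 where "d2 > 0" and d2: "\<And>x. x \<noteq> z \<Longrightarrow> dist x z < d2 \<Longrightarrow> r x \<noteq> 0"
    using nz unfolding eventually_at by blast
  define d where "d = min d1 d2"
  have sub: "ball z d - {z} \<subseteq> ball z d1 - {z}"
    by (auto simp: d_def)
  have "(\<lambda>x. \<rho> * inverse ((r x)^2)) holomorphic_on ball z d - {z}"
    "(\<lambda>x. \<rho> * (r x)^2) holomorphic_on ball z d - {z}"
    using holomorphic_on_subset[OF hol sub] d2
    by (auto intro!: holomorphic_intros simp: d_def dist_commute)
  moreover have "sysA r \<rho> = (\<lambda>x. vector [vector [0, \<rho> * inverse ((r x)^2)], vector [\<rho> * (r x)^2, 0]])"
    by (simp add: sysA_def fun_eq_iff)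
  ultimately show ?thesis
    using strong_regular_point_antidiag_iff \<open>d1 > 0\<close> \<open>d2 > 0\<close> by (simp add: d_def)
qed

lemma strong_regular_point_sysA_zero_iff:
  assumes mero: "r nicely_meromorphic_on A" and z: "z \<in> A" and nz: "\<forall>\<^sub>F x in at z. r x \<noteq> 0"
    and zero: "r z = 0" and not_pole: "\<not> is_pole r z" and simple: "zorder r z = 1"
  shows "(\<forall>\<rho>. strong_regular_point (sysA r \<rho>) z) \<longleftrightarrow> deriv (deriv r) z = 0"
proof -
  have "isolated_singularity_at r z"
    using mero z by (auto simp: nicely_meromorphic_on_def meromorphic_on_altdef)
  moreover obtain R where "R > 0" "r holomorphic_on ball z R" "deriv r z \<noteq> 0"
    using nicely_meromorphic_simple_zero[OF mero z not_pole zero simple] nz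
    by (auto simp: eventually_frequently)
  ultimately show ?thesis
    using strong_regular_point_sysA_iff[OF _ nz] simple_zero_antidiag_strong_regular_iff[of r z R] zero
    by simp
qed

lemma strong_regular_point_sysA_pole_iff:
  assumes mero: "r nicely_meromorphic_on A" and z: "z \<in> A" and nz: "\<forall>\<^sub>F x in at z. r x \<noteq> 0"
    and pole: "is_pole r z" and simple: "zorder r z = -1"
  shows "(\<forall>\<rho>. strong_regular_point (sysA r \<rho>) z) \<longleftrightarrow> deriv (deriv (\<lambda>x. inverse (r x))) z = 0"
proof -
  have "isolated_singularity_at r z"
    using mero z by (auto simp: nicely_meromorphic_on_def meromorphic_on_altdef)
  moreover obtain R where "R > 0" "(\<lambda>x. inverse (r x)) holomorphic_on ball z R"
      "inverse (r z) = 0" "deriv (\<lambda>x. inverse (r x)) z \<noteq> 0"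
    using nicely_meromorphic_simple_pole[OF mero z pole simple nz] by blast
  moreover have "antidiag_strong_regular (\<lambda>x. \<rho> * inverse ((r x)^2)) (\<lambda>x. \<rho> * (r x)^2) z \<longleftrightarrow>
      antidiag_strong_regular (\<lambda>x. \<rho> * inverse ((inverse (r x))^2)) (\<lambda>x. \<rho> * (inverse (r x))^2) z"
    for \<rho>
    using antidiag_strong_regular_swap by (auto simp: power_inverse)
  ultimately show ?thesis
    using strong_regular_point_sysA_iff[OF _ nz]
      simple_zero_antidiag_strong_regular_iff[of "\<lambda>x. inverse (r x)" z R] by simp
qed

theorem theorem6p1:
  fixes r :: "complex \<Rightarrow> complex"
  assumes mero: "r nicely_meromorphic_on UNIV"
    and nonzero: "\<exists>x. r x \<noteq> 0"
    and simple_zeros: "\<And>x. r x = 0 \<Longrightarrow> \<not> is_pole r x \<Longrightarrow> zorder r x = 1"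
    and simple_poles: "\<And>y. is_pole r y \<Longrightarrow> zorder r y = -1"
  shows "(\<forall>\<rho>::complex. \<forall>z. (r z = 0 \<or> is_pole r z) \<longrightarrow> strong_regular_point (sysA r \<rho>) z)
     \<longleftrightarrow> ((\<forall>x. r x = 0 \<and> \<not> is_pole r x \<longrightarrow> deriv (deriv r) x = 0) \<and>
          (\<forall>y. is_pole r y \<longrightarrow> deriv (deriv (\<lambda>x. inverse (r x))) y = 0))"
proof -
  have "\<forall>\<^sub>\<approx>x\<in>UNIV. r x \<noteq> 0"
    using nicely_meromorphic_imp_constant_or_avoid[OF mero open_UNIV connected_UNIV] nonzero by auto
  then have nz: "\<forall>\<^sub>F x in at z. r x \<noteq> 0" for z
    by (rule eventually_cosparse_imp_eventually_at) simp
  note zero_iff = strong_regular_point_sysA_zero_iff[OF mero UNIV_I nz _ _ simple_zeros]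
  note pole_iff = strong_regular_point_sysA_pole_iff[OF mero UNIV_I nz _ simple_poles]
  have "is_pole r z \<Longrightarrow> r z = 0" for z
    using is_pole_zero_at_nicely_mero[OF mero] by blast
  then show ?thesis
    using zero_iff pole_iff by blast
qed

end
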